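(* Let $\mu>0$ and let $X$ have the skew-symmetric-Laplace-uniform density $g$ with parameter $\mu$ (defined in the context), with reliability function $R(x)=P(X>x)$. Then the hazard rate $h(x)=g(x)/R(x)$ is $$h(x)=\begin{cases}0 & x<-\mu,\\ \left[-1+\dfrac{1+(2\mu-e^{-\mu})e^{-x}}{x+\mu}\right]^{-1} & -\mu\le x<0,\\ \left[1+\dfrac{1-e^{x-\mu}}{x+\mu}\right]^{-1} & 0\le x<\mu,\\ 1 & x\ge\mu,\end{cases}$$ (where at $x=-\mu$ the bracketed expression is interpreted as $+\infty$, so $h(-\mu)=0$). Moreover, for every $\mu\in\mathbb{R}\setminus\{0\}$ (positive or negative), the hazard rate of $SSLUD(\mu)$ is a nondecreasing function of $x$ on the set $\{x: R(x)>0\}$; that is, $SSLUD(\mu)$ is an increasing failure rate (IFR) distribution.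
   Context: For $\mu\in\mathbb{R}\setminus\{0\}$, the skew-symmetric-Laplace-uniform distribution $SSLUD(\mu)$ is the distribution on $\mathbb{R}$ with density $$g(x)=\begin{cases} 0 & \text{if } x/\mu<-1,\\ e^{-|x|}\left(\dfrac{x}{2\mu}+\dfrac12\right) & \text{if } -1\le x/\mu<1,\\ e^{-|x|} & \text{if } x/\mu\ge 1.\end{cases}$$ The hazard rate is $h(x)=g(x)/R(x)$ with $R(x)=1-G(x)$, $G$ the cdf. *)

theory Defs
  imports "HOL-Analysis.Analysis"
begin

definition sslud_density :: "real \<Rightarrow> real \<Rightarrow> real" where
  "sslud_density mu x =
     (if x / mu < -1 then 0
      else if x / mu < 1 then exp (- \<bar>x\<bar>) * (x / (2 * mu) + 1 / 2)
      else exp (- \<bar>x\<bar>))"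

definition sslud_distr :: "real \<Rightarrow> real measure" where
  "sslud_distr mu = density lborel (\<lambda>t. ennreal (sslud_density mu t))"

definition sslud_R :: "real \<Rightarrow> real \<Rightarrow> real" where
  "sslud_R mu x = measure (sslud_distr mu) {x<..}"

definition sslud_hazard :: "real \<Rightarrow> real \<Rightarrow> real" where
  "sslud_hazard mu x = sslud_density mu x / sslud_R mu x"

end

theory Submission imports Defs begin

(*
  For mu > 0 the tail R(x) = P(X > x) has an explicit piecewise closed form: it is continuous,
  its derivative is -g away from -mu, 0, mu, and it vanishes at +infinity, so by the fundamental
  theorem of calculus it is the measure of ]x, oo[.  The density of SSLUD(-mu) is the mirror image
  x |-> g(-x) of that of SSLUD(mu), so its tail is 1 - R(-x) with the same closed form.
  On each piece the reciprocal hazard R/g is an explicit function and the IFR property says that it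
  decreases.  Besides elementary monotone quotients, this rests on two facts: (1 - exp(-u))/u
  decreases for u > 0, and (2 mu + exp(-mu)) (1 - mu) <= 1.
*)

lemma has_integral_atLeast_antiderivative:
  fixes f F :: "real \<Rightarrow> real"
  assumes S: "finite S" and cont: "continuous_on UNIV F"
    and deriv: "\<And>x. x \<notin> S \<Longrightarrow> (F has_real_derivative - f x) (at x)"
    and nonneg: "\<And>x. x \<ge> a \<Longrightarrow> f x \<ge> 0" and lim: "(F \<longlongrightarrow> 0) at_top"
  shows "(f has_integral F a) {a..}"
proof (rule has_integral_to_inf)
  have FTC: "(f has_integral (F a - F y)) {a..y}" if "a \<le> y" for y
  proof -
    have "(f has_integral ((\<lambda>x. - F x) y - (\<lambda>x. - F x) a)) {a..y}"
    proof (rule fundamental_theorem_of_calculus_interior_strong[OF S that])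
      show "continuous_on {a..y} (\<lambda>x. - F x)"
        using cont by (intro continuous_intros) (auto intro: continuous_on_subset)
      show "((\<lambda>x. - F x) has_vector_derivative f x) (at x)" if "x \<in> {a<..<y} - S" for x
        using deriv[of x] that
        by (auto intro!: derivative_eq_intros simp: has_real_derivative_iff_has_vector_derivative[symmetric])
    qed
    then show ?thesis by simp
  qed
  show "f integrable_on {a..y}" for y
    using FTC by (cases "a \<le> y") (auto simp: integrable_on_def)
  have "((\<lambda>y. F a - F y) \<longlongrightarrow> F a - 0) at_top"
    by (intro tendsto_intros lim)
  moreover have "\<forall>\<^sub>F y in at_top. F a - F y = integral {a..y} f"
    using eventually_ge_at_top[of a] by eventually_elim (use FTC integral_unique in metis)
  ultimately show "((\<lambda>y. integral {a..y} f) \<longlongrightarrow> F a) at_top"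
    by (simp add: Lim_transform_eventually)
qed (use nonneg in auto)

lemma measure_density_greaterThan:
  fixes f :: "real \<Rightarrow> real"
  assumes int: "(f has_integral r) {a..}" and nonneg: "\<And>x. f x \<ge> 0"
    and [measurable]: "f \<in> borel_measurable borel"
  shows "measure (density lborel (\<lambda>x. ennreal (f x))) {a<..} = r"
proof -
  have int': "(f has_integral r) {a<..}"
    using int by (subst has_integral_spike_set_eq[where T="{a..}"])
      (auto intro: negligible_subset[of "{a}"])
  have "emeasure (density lborel (\<lambda>x. ennreal (f x))) {a<..}
      = (\<integral>\<^sup>+ x. ennreal (indicator {a<..} x * f x) \<partial>lborel)"
    by (simp add: emeasure_density) (auto intro: nn_integral_cong simp: indicator_def)
  also have "\<dots> = ennreal r"
    using nonneg by (intro nn_integral_has_integral_lebesgue int') auto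
  finally show ?thesis
    using has_integral_nonneg[OF int nonneg] by (simp add: measure_def)
qed

lemma sslud_density_uminus: "sslud_density (-m) x = sslud_density m (-x)"
  unfolding sslud_density_def by simp

lemma sslud_density_pos:
  assumes "m > 0"
  shows "sslud_density m x =
    (if x \<le> -m then 0 else if x \<le> m then exp (-\<bar>x\<bar>) * (x + m) / (2*m) else exp (-x))"
  using assms unfolding sslud_density_def by (auto simp: field_simps)

lemma sslud_density_nonneg: "sslud_density m x \<ge> 0"
proof -
  have "x / (2*m) + 1/2 = (x/m + 1) / 2" by simp
  then show ?thesis unfolding sslud_density_def by auto
qed

lemma borel_measurable_sslud_density [measurable]: "sslud_density m \<in> borel_measurable borel"
  unfolding sslud_density_def[abs_def] by measurable

lemma sslud_hazard_nonneg: "sslud_hazard mu x \<ge> 0"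
  unfolding sslud_hazard_def sslud_R_def by (simp add: sslud_density_nonneg)

lemma sslud_R_eqI:
  assumes "finite S" "continuous_on UNIV F"
    and "\<And>x. x \<notin> S \<Longrightarrow> (F has_real_derivative - sslud_density mu x) (at x)"
    and "(F \<longlongrightarrow> 0) at_top"
  shows "sslud_R mu x = F x"
  unfolding sslud_R_def sslud_distr_def using assms
  by (intro measure_density_greaterThan has_integral_atLeast_antiderivative)
    (auto simp: sslud_density_nonneg)

definition sslud_tail :: "real \<Rightarrow> real \<Rightarrow> real" where
  "sslud_tail m x =
    (if x \<le> -m then 1
     else if x \<le> 0 then (2*m - exp (-m) - exp x * (x + m - 1)) / (2*m)
     else if x \<le> m then (exp (-x) * (x + m + 1) - exp (-m)) / (2*m)
     else exp (-x))"

lemma continuous_on_sslud_tail: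
  assumes m: "m > 0"
  shows "continuous_on UNIV (sslud_tail m)"
proof -
  have "continuous_on {..-m} (sslud_tail m)"
    by (rule continuous_on_eq[of _ "\<lambda>_. 1"]) (auto simp: sslud_tail_def)
  moreover have "continuous_on {-m..0} (sslud_tail m)"
    by (rule continuous_on_eq[of _ "\<lambda>x. (2*m - exp (-m) - exp x * (x + m - 1)) / (2*m)"])
      (use m in \<open>intro continuous_intros, auto simp: sslud_tail_def field_simps\<close>)
  moreover have "continuous_on {0..m} (sslud_tail m)"
    by (rule continuous_on_eq[of _ "\<lambda>x. (exp (-x) * (x + m + 1) - exp (-m)) / (2*m)"])
      (use m in \<open>intro continuous_intros, auto simp: sslud_tail_def field_simps\<close>)
  moreover have "continuous_on {m..} (sslud_tail m)"
    by (rule continuous_on_eq[of _ "\<lambda>x. exp (-x)"])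
      (use m in \<open>intro continuous_intros, auto simp: sslud_tail_def field_simps\<close>)
  moreover have "UNIV = {..-m} \<union> {-m..0} \<union> {0..m} \<union> {m..}"
    using m by auto
  ultimately show ?thesis
    by (metis closed_atMost closed_atLeast closed_atLeastAtMost closed_Un continuous_on_closed_Un)
qed

lemma sslud_tail_has_real_derivative:
  assumes m: "m > 0" and x: "x \<notin> {-m, 0, m}"
  shows "(sslud_tail m has_real_derivative - sslud_density m x) (at x)"
proof -
  consider "x < -m" | "-m < x" "x < 0" | "0 < x" "x < m" | "m < x"
    using x by force
  then show ?thesis
  proof cases
    case 1
    show ?thesis
      by (rule has_field_derivative_transform_within_open[where f="\<lambda>_. 1" and S="{..<-m}"])
        (use 1 m in \<open>auto intro!: derivative_eq_intros simp: sslud_density_pos sslud_tail_def\<close>)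
  next
    case 2
    show ?thesis
      by (rule has_field_derivative_transform_within_open[where S="{-m<..<0}"
            and f="\<lambda>x. (2*m - exp (-m) - exp x * (x + m - 1)) / (2*m)"])
        (use 2 m in \<open>auto intro!: derivative_eq_intros simp: sslud_density_pos sslud_tail_def field_simps\<close>)
  next
    case 3
    show ?thesis
      by (rule has_field_derivative_transform_within_open[where S="{0<..<m}"
            and f="\<lambda>x. (exp (-x) * (x + m + 1) - exp (-m)) / (2*m)"])
        (use 3 m in \<open>auto intro!: derivative_eq_intros simp: sslud_density_pos sslud_tail_def field_simps\<close>)
  next
    case 4
    show ?thesis
      by (rule has_field_derivative_transform_within_open[where f="\<lambda>x. exp (-x)" and S="{m<..}"])
        (use 4 m in \<open>auto intro!: derivative_eq_intros simp: sslud_density_pos sslud_tail_def\<close>)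
  qed
qed

lemma sslud_R_pos:
  assumes m: "m > 0"
  shows "sslud_R m x = sslud_tail m x"
proof (rule sslud_R_eqI[where S="{-m, 0, m}"])
  have "((\<lambda>x::real. exp (-x)) \<longlongrightarrow> 0) at_top"
    by (rule filterlim_compose[OF exp_at_bot filterlim_uminus_at_bot_at_top])
  moreover have "\<forall>\<^sub>F x in at_top. exp (-x) = sslud_tail m x"
    using eventually_gt_at_top[of m] by eventually_elim (use m in \<open>auto simp: sslud_tail_def\<close>)
  ultimately show "(sslud_tail m \<longlongrightarrow> 0) at_top"
    by (rule Lim_transform_eventually)
qed (use m continuous_on_sslud_tail sslud_tail_has_real_derivative in auto)

lemma sslud_R_neg:
  assumes m: "m > 0"
  shows "sslud_R (-m) x = 1 - sslud_tail m (-x)"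
proof (rule sslud_R_eqI[where S="{-m, 0, m}"])
  show "continuous_on UNIV (\<lambda>x. 1 - sslud_tail m (-x))"
    by (intro continuous_intros continuous_on_compose2[OF continuous_on_sslud_tail[OF m]]) auto
  show "((\<lambda>x. 1 - sslud_tail m (-x)) has_real_derivative - sslud_density (-m) x) (at x)"
    if "x \<notin> {-m, 0, m}" for x
    using that m
    by (auto intro!: derivative_eq_intros DERIV_chain2[OF sslud_tail_has_real_derivative]
        simp: sslud_density_uminus)
  have "\<forall>\<^sub>F x in at_top. 0 = 1 - sslud_tail m (-x)"
    using eventually_gt_at_top[of m] by eventually_elim (auto simp: sslud_tail_def)
  then show "((\<lambda>x. 1 - sslud_tail m (-x)) \<longlongrightarrow> 0) at_top"
    by (rule Lim_transform_eventually[OF tendsto_const])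
qed simp

lemma sslud_hazard_eq_inverse: "sslud_hazard mu x = inverse (sslud_R mu x / sslud_density mu x)"
  by (simp add: sslud_hazard_def)

lemma sslud_hazard_pos_left:
  assumes mu: "mu > 0" and x: "-mu < x" "x \<le> 0"
  shows "sslud_hazard mu x = inverse (-1 + (1 + (2*mu - exp (-mu)) * exp (-x)) / (x + mu))"
proof -
  have "sslud_R mu x / sslud_density mu x
      = (2*mu - exp (-mu) - exp x * (x + mu - 1)) / (exp x * (x + mu))"
    using mu x by (simp add: sslud_R_pos sslud_tail_def sslud_density_pos)
  also have "2*mu - exp (-mu) - exp x * (x + mu - 1)
      = exp x * ((2*mu - exp (-mu)) * exp (-x) - (x + mu - 1))"
    by (simp add: field_simps exp_minus)
  also have "\<dots> / (exp x * (x + mu)) = ((2*mu - exp (-mu)) * exp (-x) - (x + mu - 1)) / (x + mu)"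
    by simp
  also have "\<dots> = -1 + (1 + (2*mu - exp (-mu)) * exp (-x)) / (x + mu)"
    using x by (simp add: field_simps)
  finally show ?thesis
    by (simp only: sslud_hazard_eq_inverse)
qed

lemma sslud_hazard_pos_right:
  assumes mu: "mu > 0" and x: "0 \<le> x" "x \<le> mu"
  shows "sslud_hazard mu x = inverse (1 + (1 - exp (x - mu)) / (x + mu))"
proof -
  have "sslud_R mu x = (exp (-x) * (x + mu + 1) - exp (-mu)) / (2*mu)"
    using mu x by (cases "x = 0") (auto simp: sslud_R_pos sslud_tail_def field_simps)
  then have "sslud_R mu x / sslud_density mu x
      = (exp (-x) * (x + mu + 1) - exp (-mu)) / (exp (-x) * (x + mu))"
    using mu x by (simp add: sslud_density_pos)
  also have "exp (-x) * (x + mu + 1) - exp (-mu) = exp (-x) * (x + mu + 1 - exp (x - mu))"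
    by (simp add: exp_diff exp_minus field_simps)
  also have "\<dots> / (exp (-x) * (x + mu)) = (x + mu + 1 - exp (x - mu)) / (x + mu)"
    by simp
  also have "\<dots> = 1 + (1 - exp (x - mu)) / (x + mu)"
    using mu x by (simp add: field_simps)
  finally show ?thesis
    by (simp only: sslud_hazard_eq_inverse)
qed

lemma sslud_hazard_pos_outer:
  assumes "mu > 0"
  shows "x \<le> -mu \<Longrightarrow> sslud_hazard mu x = 0" and "mu \<le> x \<Longrightarrow> sslud_hazard mu x = 1"
  using assms
  by (auto simp: sslud_hazard_def sslud_density_pos sslud_R_pos sslud_tail_def field_simps)

lemma sslud_hazard_pos:
  assumes "mu > 0"
  shows "sslud_hazard mu x =
    (if x \<le> -mu then 0
     else if x < 0 then inverse (-1 + (1 + (2 * mu - exp (- mu)) * exp (- x)) / (x + mu))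
     else if x < mu then inverse (1 + (1 - exp (x - mu)) / (x + mu))
     else 1)"
  using assms sslud_hazard_pos_outer[OF assms]
  by (auto simp: sslud_hazard_pos_left sslud_hazard_pos_right)

lemma sslud_hazard_neg_left:
  assumes m: "m > 0" and x: "x \<le> -m"
  shows "sslud_hazard (-m) x = exp x / (1 - exp x)"
  using m x
  by (cases "x = -m") (auto simp: sslud_hazard_def sslud_density_uminus sslud_density_pos
      sslud_R_neg sslud_tail_def field_simps)

lemma sslud_hazard_neg_mid:
  assumes m: "m > 0" and x: "-m \<le> x" "x \<le> 0"
  shows "sslud_hazard (-m) x = inverse (-1 + ((2*m + exp (-m)) * exp (-x) - 1) / (m - x))"
proof -
  have "sslud_R (-m) x / sslud_density (-m) x
      = (2*m + exp (-m) - exp x * (m - x + 1)) / (exp x * (m - x))"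
    using m x by (cases "x = 0")
      (auto simp: sslud_R_neg sslud_tail_def sslud_density_uminus sslud_density_pos field_simps)
  also have "2*m + exp (-m) - exp x * (m - x + 1)
      = exp x * ((2*m + exp (-m)) * exp (-x) - (m - x + 1))"
    by (simp add: field_simps exp_minus)
  also have "\<dots> / (exp x * (m - x)) = ((2*m + exp (-m)) * exp (-x) - (m - x + 1)) / (m - x)"
    by simp
  also have "\<dots> = -1 + ((2*m + exp (-m)) * exp (-x) - 1) / (m - x)"
    using m x by (simp add: field_simps)
  finally show ?thesis
    by (simp only: sslud_hazard_eq_inverse)
qed

lemma sslud_hazard_neg_right:
  assumes m: "m > 0" and x: "0 \<le> x" "x < m"
  shows "sslud_hazard (-m) x = inverse (1 - (1 - exp (x - m)) / (m - x))"
proof -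
  have "sslud_R (-m) x / sslud_density (-m) x
      = (exp (-m) + exp (-x) * (m - x - 1)) / (exp (-x) * (m - x))"
    using m x by (cases "x = 0")
      (auto simp: sslud_R_neg sslud_tail_def sslud_density_uminus sslud_density_pos field_simps)
  also have "exp (-m) + exp (-x) * (m - x - 1) = exp (-x) * (exp (x - m) + (m - x - 1))"
    by (simp add: exp_diff exp_minus field_simps)
  also have "\<dots> / (exp (-x) * (m - x)) = (exp (x - m) + (m - x - 1)) / (m - x)"
    by simp
  also have "\<dots> = 1 - (1 - exp (x - m)) / (m - x)"
    using x by (simp add: field_simps)
  finally show ?thesis
    by (simp only: sslud_hazard_eq_inverse)
qed

lemma sslud_R_neg_pos_imp_less:
  assumes "m > 0" "sslud_R (-m) x > 0"
  shows "x < m"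
  using assms by (auto simp: sslud_R_neg sslud_tail_def split: if_splits)

lemma mono_on_Un:
  fixes f :: "'a::linorder \<Rightarrow> 'b::preorder"
  assumes "mono_on A f" "mono_on B f" "p \<in> A" "p \<in> B" "\<forall>a\<in>A. a \<le> p" "\<forall>b\<in>B. p \<le> b"
  shows "mono_on (A \<union> B) f"
proof (rule mono_onI)
  fix x y assume xy: "x \<in> A \<union> B" "y \<in> A \<union> B" "x \<le> y"
  consider "x \<in> A" "y \<in> A" | "x \<in> B" "y \<in> B" | "x \<in> A" "y \<in> B" | "x \<in> B" "y \<in> A" "x = y"
    using xy assms(5,6) by (metis Un_iff order_antisym order_trans)
  then show "f x \<le> f y"
  proof cases
    case 3
    then have "f x \<le> f p" "f p \<le> f y"
      using assms by (auto intro: mono_onD)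
    then show ?thesis by (rule order_trans)
  qed (use assms xy in \<open>auto intro: mono_onD\<close>)
qed

lemma one_minus_exp_minus_div_antimono:
  fixes u v :: real
  assumes u: "0 < u" and uv: "u \<le> v"
  shows "(1 - exp (-v)) / v \<le> (1 - exp (-u)) / u"
proof (rule DERIV_nonpos_imp_nonincreasing[OF uv])
  fix t assume "u \<le> t" "t \<le> v"
  then have t: "t > 0" using u by linarith
  have "((\<lambda>t. (1 - exp (-t)) / t) has_real_derivative (exp (-t) * (1 + t) - 1) / t\<^sup>2) (at t)"
    by (rule derivative_eq_intros refl | use t in \<open>simp add: field_simps power2_eq_square\<close>)+
  moreover have "exp (-t) * (1 + t) \<le> exp (-t) * exp t"
    by (intro mult_left_mono) auto
  ultimately show "\<exists>d. ((\<lambda>t. (1 - exp (-t)) / t) has_real_derivative d) (at t) \<and> d \<le> 0"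
    by (auto simp: exp_minus divide_nonpos_nonneg)
qed

lemma reciprocal_hazard_pos_left_antimono:
  fixes mu x y :: real
  assumes mu: "mu > 0" and xy: "-mu < x" "x \<le> y"
  shows "(1 + (2*mu - exp (-mu)) * exp (-y)) / (y + mu) \<le> (1 + (2*mu - exp (-mu)) * exp (-x)) / (x + mu)"
proof -
  \<comment> \<open>The coefficient \<open>2*mu - exp (-mu)\<close> may be negative; after the split both parts decrease.\<close>
  have split: "(1 + (2*mu - exp (-mu)) * exp (-t)) / (t + mu)
      = (1 - exp (-(t + mu))) / (t + mu) + 2*mu * exp (-t) / (t + mu)" for t
  proof -
    have "exp (-(t + mu)) = exp (-mu) * exp (-t)"
      by (metis add.commute exp_add minus_add_distrib)
    then show ?thesis
      unfolding add_divide_distrib[symmetric] by (simp add: algebra_simps)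
  qed
  have "(1 - exp (-(y + mu))) / (y + mu) \<le> (1 - exp (-(x + mu))) / (x + mu)"
    using xy by (intro one_minus_exp_minus_div_antimono) auto
  moreover have "2*mu * exp (-y) / (y + mu) \<le> 2*mu * exp (-x) / (x + mu)"
    using xy mu by (intro frac_le) auto
  ultimately show ?thesis
    by (simp only: split add_mono)
qed

lemma mono_on_sslud_hazard_pos_left:
  assumes mu: "mu > 0"
  shows "mono_on {-mu..0} (sslud_hazard mu)"
proof -
  define D where "D t = -1 + (1 + (2*mu - exp (-mu)) * exp (-t)) / (t + mu)" for t
  have D_antimono: "D y \<le> D x" if "-mu < x" "x \<le> y" for x y
    using reciprocal_hazard_pos_left_antimono[OF mu that] by (simp add: D_def)
  have "D 0 = 1 + (1 - exp (-mu)) / mu"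
    using mu by (simp add: D_def field_simps)
  then have D0: "D 0 > 0"
    using mu by (simp add: add_pos_nonneg)
  show ?thesis
  proof (rule mono_onI)
    fix x y assume xy: "x \<in> {-mu..0}" "y \<in> {-mu..0}" "x \<le> y"
    show "sslud_hazard mu x \<le> sslud_hazard mu y"
    proof (cases "x = -mu")
      case True
      then show ?thesis
        using sslud_hazard_pos_outer(1)[OF mu] sslud_hazard_nonneg by simp
    next
      case False
      then have x: "-mu < x" using xy by simp
      have "0 < D y"
        using D_antimono[of y 0] D0 x xy by simp
      then have "inverse (D x) \<le> inverse (D y)"
        using D_antimono[OF x xy(3)] by (intro le_imp_inverse_le)
      then show ?thesis
        using x xy by (simp add: sslud_hazard_pos_left[OF mu] D_def)
    qed
  qed
qed

lemma mono_on_sslud_hazard_pos_right: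
  assumes mu: "mu > 0"
  shows "mono_on {0..mu} (sslud_hazard mu)"
proof (rule mono_onI)
  fix x y assume xy: "x \<in> {0..mu}" "y \<in> {0..mu}" "x \<le> y"
  have "(1 - exp (y - mu)) / (y + mu) \<le> (1 - exp (x - mu)) / (x + mu)"
    using xy mu by (intro frac_le) auto
  moreover have "0 \<le> (1 - exp (y - mu)) / (y + mu)"
    using xy mu by (intro divide_nonneg_pos) auto
  ultimately have "inverse (1 + (1 - exp (x - mu)) / (x + mu)) \<le> inverse (1 + (1 - exp (y - mu)) / (y + mu))"
    by (intro le_imp_inverse_le) auto
  then show "sslud_hazard mu x \<le> sslud_hazard mu y"
    using xy by (simp add: sslud_hazard_pos_right[OF mu])
qed

lemma mono_on_sslud_hazard_pos:
  assumes mu: "mu > 0"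
  shows "mono_on UNIV (sslud_hazard mu)"
proof -
  have "mono_on {..-mu} (sslud_hazard mu)" "mono_on {mu..} (sslud_hazard mu)"
    by (auto intro!: mono_onI simp: sslud_hazard_pos_outer[OF mu])
  then have "mono_on ((({..-mu} \<union> {-mu..0}) \<union> {0..mu}) \<union> {mu..}) (sslud_hazard mu)"
    using mu mono_on_sslud_hazard_pos_left[OF mu] mono_on_sslud_hazard_pos_right[OF mu]
    by (intro mono_on_Un[where p=mu] mono_on_Un[where p=0] mono_on_Un[where p="-mu"]) auto
  moreover have "(({..-mu} \<union> {-mu..0}) \<union> {0..mu}) \<union> {mu..} = UNIV"
    by auto
  ultimately show ?thesis
    by simp
qed

lemma exp_minus_plus_two_mult_bound:
  fixes m :: real
  assumes m: "m > 0"
  shows "(2*m + exp (-m)) * (1 - m) \<le> 1"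
proof (cases "m \<le> 1")
  case True
  have "exp (-m) * (1 + m) \<le> exp (-m) * exp m"
    by (intro mult_left_mono) auto
  then have e: "exp (-m) * (1 + m) \<le> 1"
    by (simp add: exp_minus)
  have "(1 + m) * ((2*m + exp (-m)) * (1 - m)) = 2*m - 2*m^3 + exp (-m) * (1 + m) * (1 - m)"
    by (simp add: algebra_simps power3_eq_cube)
  also have "\<dots> \<le> 2*m + 1 * (1 - m)"
    using m True e by (intro add_mono diff_le_self mult_right_mono) auto
  also have "\<dots> = (1 + m) * 1"
    by simp
  finally show ?thesis
    using m by (simp only: mult_le_cancel_left_pos)
next
  case False
  then have "(2*m + exp (-m)) * (1 - m) \<le> 0"
    using m by (intro mult_nonneg_nonpos) auto
  then show ?thesis
    by linarith
qed

lemma reciprocal_hazard_neg_mid_antimono: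
  fixes m x y :: real
  assumes m: "m > 0" and xy: "x \<le> y" "y \<le> 0"
  shows "((2*m + exp (-m)) * exp (-y) - 1) / (m - y) \<le> ((2*m + exp (-m)) * exp (-x) - 1) / (m - x)"
proof (rule DERIV_nonpos_imp_nonincreasing[OF xy(1)])
  define L where "L = 2*m + exp (-m)"
  fix t assume "x \<le> t" "t \<le> y"
  then have t: "t \<le> 0" "m - t > 0"
    using xy m by auto
  have "((\<lambda>t. (L * exp (-t) - 1) / (m - t)) has_real_derivative
      (L * exp (-t) * (1 - m + t) - 1) / (m - t)\<^sup>2) (at t)"
    by (rule derivative_eq_intros refl | use t in \<open>simp add: field_simps power2_eq_square\<close>)+
  moreover have "L * (1 - m + t) \<le> exp t"
  proof (cases "1 - m + t \<le> 0")
    case True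
    then show ?thesis
      using m by (smt (verit) L_def exp_gt_zero mult_nonneg_nonpos)
  next
    case False
    then have "1 - m + t \<le> (1 - m) * (1 + t)" "0 < 1 - m" "0 < 1 + t"
      using t m by (auto simp: algebra_simps mult_nonneg_nonpos)
    then have "L * (1 - m + t) \<le> L * (1 - m) * (1 + t)"
      using m by (simp add: L_def add_pos_pos)
    also have "\<dots> \<le> 1 * (1 + t)"
      using exp_minus_plus_two_mult_bound[OF m] \<open>0 < 1 + t\<close>
      by (intro mult_right_mono) (auto simp: L_def)
    also have "\<dots> \<le> exp t"
      by simp
    finally show ?thesis .
  qed
  then have "L * exp (-t) * (1 - m + t) \<le> 1"
    by (simp add: exp_minus field_simps)
  ultimately show "\<exists>d. ((\<lambda>t. ((2*m + exp (-m)) * exp (-t) - 1) / (m - t)) has_real_derivative d) (at t)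
      \<and> d \<le> 0"
    by (auto simp: L_def divide_nonpos_nonneg)
qed

lemma mono_on_sslud_hazard_neg_mid:
  assumes m: "m > 0"
  shows "mono_on {-m..0} (sslud_hazard (-m))"
proof -
  define D where "D t = -1 + ((2*m + exp (-m)) * exp (-t) - 1) / (m - t)" for t
  have D_antimono: "D y \<le> D x" if "x \<le> y" "y \<le> 0" for x y
    using reciprocal_hazard_neg_mid_antimono[OF m that] by (simp add: D_def)
  have "D 0 = (exp (-m) - (1 - m)) / m"
    using m by (simp add: D_def field_simps)
  then have D0: "D 0 > 0"
    using m exp_minus_greater[of m] by simp
  show ?thesis
  proof (rule mono_onI)
    fix x y assume xy: "x \<in> {-m..0}" "y \<in> {-m..0}" "x \<le> y"
    have "0 < D y"
      using D_antimono[of y 0] D0 xy by simp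
    then have "inverse (D x) \<le> inverse (D y)"
      using D_antimono[of x y] xy by (intro le_imp_inverse_le) auto
    then show "sslud_hazard (-m) x \<le> sslud_hazard (-m) y"
      using xy by (simp add: sslud_hazard_neg_mid[OF m] D_def)
  qed
qed

lemma mono_on_sslud_hazard_neg_right:
  assumes m: "m > 0"
  shows "mono_on {0..<m} (sslud_hazard (-m))"
proof (rule mono_onI)
  fix x y assume xy: "x \<in> {0..<m}" "y \<in> {0..<m}" "x \<le> y"
  have "(1 - exp (-(m - x))) / (m - x) \<le> (1 - exp (-(m - y))) / (m - y)"
    using xy by (intro one_minus_exp_minus_div_antimono) auto
  moreover have "1 - (m - y) < exp (-(m - y))"
    using xy exp_minus_greater[of "m - y"] by simp
  then have "(1 - exp (-(m - y))) / (m - y) < 1"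
    using xy by simp
  ultimately have "inverse (1 - (1 - exp (x - m)) / (m - x)) \<le> inverse (1 - (1 - exp (y - m)) / (m - y))"
    by (intro le_imp_inverse_le) auto
  then show "sslud_hazard (-m) x \<le> sslud_hazard (-m) y"
    using xy by (simp add: sslud_hazard_neg_right[OF m])
qed

lemma mono_on_sslud_hazard_neg:
  assumes m: "m > 0"
  shows "mono_on {..<m} (sslud_hazard (-m))"
proof -
  have "mono_on {..-m} (sslud_hazard (-m))"
  proof (rule mono_onI)
    fix x y assume xy: "x \<in> {..-m}" "y \<in> {..-m}" "x \<le> y"
    then have "exp x / (1 - exp x) \<le> exp y / (1 - exp y)"
      using m by (intro frac_le) auto
    then show "sslud_hazard (-m) x \<le> sslud_hazard (-m) y"
      using xy by (simp add: sslud_hazard_neg_left[OF m])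
  qed
  then have "mono_on (({..-m} \<union> {-m..0}) \<union> {0..<m}) (sslud_hazard (-m))"
    using m mono_on_sslud_hazard_neg_mid[OF m] mono_on_sslud_hazard_neg_right[OF m]
    by (intro mono_on_Un[where p=0] mono_on_Un[where p="-m"]) auto
  moreover have "({..-m} \<union> {-m..0}) \<union> {0..<m} = {..<m}"
    using m by auto
  ultimately show ?thesis
    by simp
qed

theorem mainTheorem6:
  shows "(\<forall>mu::real. mu > 0 \<longrightarrow> (\<forall>x::real.
            sslud_hazard mu x =
              (if x \<le> - mu then 0
               else if x < 0 then
                 inverse (-1 + (1 + (2 * mu - exp (- mu)) * exp (- x)) / (x + mu))
               else if x < mu then
                 inverse (1 + (1 - exp (x - mu)) / (x + mu))
               else 1)))
       \<and> (\<forall>mu::real. mu \<noteq> 0 \<longrightarrow>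
            mono_on {x. sslud_R mu x > 0} (sslud_hazard mu))"
proof (intro conjI allI impI)
  fix mu :: real
  assume "mu \<noteq> 0"
  show "mono_on {x. sslud_R mu x > 0} (sslud_hazard mu)"
  proof (cases "mu > 0")
    case True
    then show ?thesis
      using mono_on_sslud_hazard_pos mono_on_subset by blast
  next
    case False
    define m where "m = -mu"
    have m: "m > 0" and mu: "mu = -m"
      using False \<open>mu \<noteq> 0\<close> by (auto simp: m_def)
    have "{x. sslud_R mu x > 0} \<subseteq> {..<m}"
      using sslud_R_neg_pos_imp_less[OF m] mu by auto
    then show ?thesis
      using mono_on_sslud_hazard_neg[OF m] mono_on_subset mu by blast
  qed
qed (rule sslud_hazard_pos)

end
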